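(* Let $\Phi(n)$ be an $\mathrm{st}_{\mathbb N}$-prenex formula, possibly with arbitrary (not necessarily standard) parameters. Then (in SPOT) $$\exists^{\mathrm{st}} S\;\forall^{\mathrm{st}} n\;\big(n\in S \iff n\in\mathbb N\wedge \Phi(n)\big).$$
   Context: We work in the theory SPOT. Its language is the $\in$-language (membership together with the usual defined symbols of mathematics such as $\mathbb N,\mathbb R,<,+,\cdot$) enriched by a unary predicate $\mathrm{st}$ ("$x$ is standard"). An $\in$-formula is a formula not mentioning $\mathrm{st}$. $\forall^{\mathrm{st}}x$ and $\exists^{\mathrm{st}}x$ denote quantifiers restricted to standard sets. The axioms of SPOT are: ZF; Transfer: for every $\in$-formula $\varphi(x)$ all of whose parameters are standard, $\forall^{\mathrm{st}}x\,\varphi(x)\to\forall x\,\varphi(x)$; Nontriviality: $\exists \nu\in\mathbb N\,\forall^{\mathrm{st}}n\in\mathbb N\,(n\neq\nu)$; Standard Part: $\forall A\subseteq\mathbb N\,\exists^{\mathrm{st}}B\subseteq\mathbb N\,\forall^{\mathrm{st}}n\in\mathbb N\,(n\in B\iff n\in A)$. A real $x$ is limited if $|x|\le n$ for some standard $n\in\mathbb N$; $x\approx r$ means $|x-r|\le 1/n$ for all standard $n\ge 1$; $x$ is infinitesimal if $x\approx 0$ and $x\ne0$; for limited $x$, $\mathrm{sh}(x)$ denotes the unique standard real $r$ with $x\approx r$. Write $\forall^{\mathrm{st}}_{\mathbb N}u\,\dots$ for $\forall u\,(u\in\mathbb N\wedge\mathrm{st}(u)\to\dots)$ and $\exists^{\mathrm{st}}_{\mathbb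 N}u\,\dots$ for $\exists u\,(u\in\mathbb N\wedge\mathrm{st}(u)\wedge\dots)$. An $\mathrm{st}_{\mathbb N}$-prenex formula is a formula of the form $\mathsf Q^{\mathrm{st}}_{\mathbb N}u_1\cdots\mathsf Q^{\mathrm{st}}_{\mathbb N}u_s\,\psi(u_1,\dots,u_s,v_1,\dots,v_r)$ where $\psi$ is an $\in$-formula and each $\mathsf Q$ is $\forall$ or $\exists$. *)

theory Defs
  imports Main
begin

text \<open>Deep embedding of first-order \<in>-formulas (no st predicate): these are
  exactly the internal formulas.  Variables are natural numbers.\<close>

datatype fm = Mem nat nat | Eq nat nat | Neg fm | Conj fm fm | Ex nat fm

fun sat :: "('u \<Rightarrow> 'u \<Rightarrow> bool) \<Rightarrow> (nat \<Rightarrow> 'u) \<Rightarrow> fm \<Rightarrow> bool" where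
  "sat M \<rho> (Mem i j) = M (\<rho> i) (\<rho> j)"
| "sat M \<rho> (Eq i j) = (\<rho> i = \<rho> j)"
| "sat M \<rho> (Neg \<phi>) = (\<not> sat M \<rho> \<phi>)"
| "sat M \<rho> (Conj \<phi> \<psi>) = (sat M \<rho> \<phi> \<and> sat M \<rho> \<psi>)"
| "sat M \<rho> (Ex v \<phi>) = (\<exists>a. sat M (\<rho>(v := a)) \<phi>)"

fun fv :: "fm \<Rightarrow> nat set" where
  "fv (Mem i j) = {i, j}"
| "fv (Eq i j) = {i, j}"
| "fv (Neg \<phi>) = fv \<phi>"
| "fv (Conj \<phi> \<psi>) = fv \<phi> \<union> fv \<psi>"
| "fv (Ex v \<phi>) = fv \<phi> - {v}"

definition inductive_set_zf :: "('u \<Rightarrow> 'u \<Rightarrow> bool) \<Rightarrow> 'u \<Rightarrow> bool" where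
  "inductive_set_zf M w \<longleftrightarrow>
     (\<exists>e. M e w \<and> (\<forall>y. \<not> M y e)) \<and>
     (\<forall>x. M x w \<longrightarrow> (\<exists>s. M s w \<and> (\<forall>y. M y s \<longleftrightarrow> M y x \<or> y = x)))"

definition zf_model :: "('u \<Rightarrow> 'u \<Rightarrow> bool) \<Rightarrow> bool" where
  "zf_model M \<longleftrightarrow>
     \<comment> \<open>Extensionality\<close>
     (\<forall>a b. (\<forall>x. M x a \<longleftrightarrow> M x b) \<longrightarrow> a = b) \<and>
     \<comment> \<open>Foundation\<close>
     (\<forall>a. (\<exists>x. M x a) \<longrightarrow> (\<exists>x. M x a \<and> \<not> (\<exists>y. M y x \<and> M y a))) \<and>
     \<comment> \<open>Pairing\<close>
     (\<forall>a b. \<exists>c. \<forall>x. M x c \<longleftrightarrow> x = a \<or> x = b) \<and>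
     \<comment> \<open>Union\<close>
     (\<forall>a. \<exists>c. \<forall>x. M x c \<longleftrightarrow> (\<exists>y. M y a \<and> M x y)) \<and>
     \<comment> \<open>Power set\<close>
     (\<forall>a. \<exists>c. \<forall>x. M x c \<longleftrightarrow> (\<forall>y. M y x \<longrightarrow> M y a)) \<and>
     \<comment> \<open>Infinity\<close>
     (\<exists>w. inductive_set_zf M w) \<and>
     \<comment> \<open>Separation schema (\<in>-formulas, arbitrary parameters)\<close>
     (\<forall>\<phi> \<rho> k a. \<exists>b. \<forall>x. M x b \<longleftrightarrow> M x a \<and> sat M (\<rho>(k := x)) \<phi>) \<and>
     \<comment> \<open>Replacement schema (\<in>-formulas, arbitrary parameters)\<close>
     (\<forall>\<phi> \<rho> k l a. k \<noteq> l \<longrightarrow>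
        (\<forall>x. M x a \<longrightarrow> (\<exists>!y. sat M (\<rho>(k := x, l := y)) \<phi>)) \<longrightarrow>
        (\<exists>c. \<forall>y. M y c \<longleftrightarrow> (\<exists>x. M x a \<and> sat M (\<rho>(k := x, l := y)) \<phi>)))"

definition nat_zf :: "('u \<Rightarrow> 'u \<Rightarrow> bool) \<Rightarrow> 'u" where
  "nat_zf M = (THE w. inductive_set_zf M w \<and>
                 (\<forall>z. inductive_set_zf M z \<longrightarrow> (\<forall>x. M x w \<longrightarrow> M x z)))"

definition spot_model :: "('u \<Rightarrow> 'u \<Rightarrow> bool) \<Rightarrow> ('u \<Rightarrow> bool) \<Rightarrow> bool" where
  "spot_model M st \<longleftrightarrow>
     zf_model M \<and>
     \<comment> \<open>Transfer: \<in>-formula \<phi>(x) with all parameters standard\<close>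
     (\<forall>\<phi> x \<rho>. (\<forall>v\<in>fv \<phi> - {x}. st (\<rho> v)) \<longrightarrow>
        (\<forall>a. st a \<longrightarrow> sat M (\<rho>(x := a)) \<phi>) \<longrightarrow> (\<forall>a. sat M (\<rho>(x := a)) \<phi>)) \<and>
     \<comment> \<open>Nontriviality\<close>
     (\<exists>\<nu>. M \<nu> (nat_zf M) \<and> (\<forall>n. st n \<and> M n (nat_zf M) \<longrightarrow> n \<noteq> \<nu>)) \<and>
     \<comment> \<open>Standard Part\<close>
     (\<forall>A. (\<forall>x. M x A \<longrightarrow> M x (nat_zf M)) \<longrightarrow>
        (\<exists>B. st B \<and> (\<forall>x. M x B \<longrightarrow> M x (nat_zf M)) \<and>
             (\<forall>n. st n \<and> M n (nat_zf M) \<longrightarrow> (M n B \<longleftrightarrow> M n A))))"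

text \<open>A quantifier prefix is a list of pairs (q, u): q = True means
  \<forall>st_N u, q = False means \<exists>st_N u.  The matrix is an \<in>-formula.\<close>
fun sat_prenex :: "('u \<Rightarrow> 'u \<Rightarrow> bool) \<Rightarrow> ('u \<Rightarrow> bool) \<Rightarrow> (nat \<Rightarrow> 'u)
                     \<Rightarrow> (bool \<times> nat) list \<Rightarrow> fm \<Rightarrow> bool" where
  "sat_prenex M st \<rho> [] \<psi> = sat M \<rho> \<psi>"
| "sat_prenex M st \<rho> ((True, u) # qs) \<psi> =
     (\<forall>a. M a (nat_zf M) \<and> st a \<longrightarrow> sat_prenex M st (\<rho>(u := a)) qs \<psi>)"
| "sat_prenex M st \<rho> ((False, u) # qs) \<psi> =
     (\<exists>a. M a (nat_zf M) \<and> st a \<and> sat_prenex M st (\<rho>(u := a)) qs \<psi>)"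

end

theory Submission
  imports Defs
begin

text \<open>By induction on the quantifier prefix: for every list \<open>vs\<close> of variables there is a standard
  \<open>C \<subseteq> \<nat>\<close> such that a standard tuple \<open>xs\<close> of natural numbers satisfies the formula (with
  \<open>vs := xs\<close>) iff the code of \<open>xs\<close> lies in \<open>C\<close>, codes being iterated Cantor pairs. For the
  \<in>-matrix, \<open>C\<close> is the standard part of the internal set of codes of all satisfying tuples. A
  quantifier \<open>\<forall>\<^sup>s\<^sup>t u\<close> over the last coordinate is absorbed by Transfer: for a standard code
  \<open>c\<close>, "\<open>cantor c a \<in> C\<close> for all standard \<open>a\<close>" is equivalent to "for all \<open>a\<close>", an internal
  condition on \<open>c\<close> with standard parameters, whose extension within \<open>\<nat>\<close> is therefore standard;
  dually for \<open>\<exists>\<^sup>s\<^sup>t u\<close>. As the model is an arbitrary ZF structure, the Cantor pairing on its \<open>\<nat>\<close>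
  is constructed internally, as a relation defined by recursion; it is then definable from the
  standard parameter \<open>\<nat>\<close> and sends standard pairs to standard codes.\<close>

text \<open>The concrete \<in>-formulas needed below are written with de Bruijn indices: \<open>B i\<close> refers to
  the \<open>i\<close>-th enclosing binder, \<open>P j\<close> to the \<open>j\<close>-th parameter. \<open>compile\<close> turns them into
  formulas of type \<open>fm\<close>.\<close>

datatype tm = B nat | P nat
datatype df = DMem tm tm | DEq tm tm | DNeg df | DConj df df | DEx df

abbreviation "DAll f \<equiv> DNeg (DEx (DNeg f))"
abbreviation "DImp f g \<equiv> DNeg (DConj f (DNeg g))"
abbreviation "DOr f g \<equiv> DNeg (DConj (DNeg f) (DNeg g))"
abbreviation "DIff f g \<equiv> DConj (DImp f g) (DImp g f)"

definition econs :: "'u \<Rightarrow> (nat \<Rightarrow> 'u) \<Rightarrow> nat \<Rightarrow> 'u" (infixr "##" 65) where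
  "a ## e = (\<lambda>i. case i of 0 \<Rightarrow> a | Suc j \<Rightarrow> e j)"

lemma econs_0 [simp]: "(a ## e) 0 = a"
  and econs_Suc [simp]: "(a ## e) (Suc i) = e i"
  and econs_numeral [simp]: "(a ## e) (numeral k) = e (pred_numeral k)"
  by (simp_all add: econs_def numeral_eq_Suc)

fun tval :: "(nat \<Rightarrow> 'u) \<Rightarrow> (nat \<Rightarrow> 'u) \<Rightarrow> tm \<Rightarrow> 'u" where
  "tval e p (B i) = e i"
| "tval e p (P j) = p j"

fun dsat :: "('u \<Rightarrow> 'u \<Rightarrow> bool) \<Rightarrow> (nat \<Rightarrow> 'u) \<Rightarrow> (nat \<Rightarrow> 'u) \<Rightarrow> df \<Rightarrow> bool" where
  "dsat M e p (DMem s t) = M (tval e p s) (tval e p t)"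
| "dsat M e p (DEq s t) = (tval e p s = tval e p t)"
| "dsat M e p (DNeg f) = (\<not> dsat M e p f)"
| "dsat M e p (DConj f g) = (dsat M e p f \<and> dsat M e p g)"
| "dsat M e p (DEx f) = (\<exists>a. dsat M (a ## e) p f)"

fun lift :: "tm \<Rightarrow> tm" where
  "lift (B i) = B (Suc i)"
| "lift (P j) = P j"

lemma tval_lift [simp]: "tval (a ## e) p (lift t) = tval e p t"
  by (cases t) auto

fun tm_closed :: "nat \<Rightarrow> tm \<Rightarrow> bool" where
  "tm_closed d (B i) = (i < d)"
| "tm_closed d (P j) = True"

fun closed :: "nat \<Rightarrow> df \<Rightarrow> bool" where
  "closed d (DMem s t) = (tm_closed d s \<and> tm_closed d t)"
| "closed d (DEq s t) = (tm_closed d s \<and> tm_closed d t)"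
| "closed d (DNeg f) = closed d f"
| "closed d (DConj f g) = (closed d f \<and> closed d g)"
| "closed d (DEx f) = closed (Suc d) f"

lemma tm_closed_lift [simp]: "tm_closed (Suc d) (lift t) = tm_closed d t"
  by (cases t) auto

lemma closed_mono: "closed d f \<Longrightarrow> d \<le> d' \<Longrightarrow> closed d' f"
proof (induction f arbitrary: d d')
  case (DMem s t) then show ?case by (cases s; cases t) auto
next
  case (DEq s t) then show ?case by (cases s; cases t) auto
qed auto

fun tm_params :: "tm \<Rightarrow> nat set" where
  "tm_params (B i) = {}"
| "tm_params (P j) = {j}"

fun params :: "df \<Rightarrow> nat set" where
  "params (DMem s t) = tm_params s \<union> tm_params t"
| "params (DEq s t) = tm_params s \<union> tm_params t"
| "params (DNeg f) = params f"
| "params (DConj f g) = params f \<union> params g"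
| "params (DEx f) = params f"

lemma tm_params_lift [simp]: "tm_params (lift t) = tm_params t"
  by (cases t) auto

lemma tval_cong:
  "tm_closed d t \<Longrightarrow> \<forall>i<d. e i = e' i \<Longrightarrow> \<forall>j\<in>tm_params t. p j = p' j \<Longrightarrow> tval e p t = tval e' p' t"
  by (cases t) auto

lemma dsat_cong:
  "closed d f \<Longrightarrow> \<forall>i<d. e i = e' i \<Longrightarrow> \<forall>j\<in>params f. p j = p' j \<Longrightarrow> dsat M e p f = dsat M e' p' f"
proof (induction f arbitrary: d e e')
  case (DMem s t) then show ?case using tval_cong[of d s e e' p p'] tval_cong[of d t e e' p p'] by simp
next
  case (DEq s t) then show ?case using tval_cong[of d s e e' p p'] tval_cong[of d t e e' p p'] by simp
next
  case (DConj f g) then show ?case by (metis Un_iff closed.simps(4) dsat.simps(4) params.simps(4))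
next
  case (DEx f)
  have "dsat M (a ## e) p f = dsat M (a ## e') p' f" for a
    by (rule DEx.IH[of "Suc d"]) (use DEx.prems in \<open>auto simp: less_Suc_eq_0_disj\<close>)
  then show ?case by simp
qed simp

text \<open>Bound index \<open>i\<close> at depth \<open>d\<close> becomes the variable \<open>m + (d - Suc i)\<close>, parameter \<open>j\<close> the
  variable \<open>pv j\<close>; choosing \<open>m\<close> above all \<open>pv j\<close> avoids capture.\<close>

fun compile_tm :: "nat \<Rightarrow> (nat \<Rightarrow> nat) \<Rightarrow> nat \<Rightarrow> tm \<Rightarrow> nat" where
  "compile_tm m pv d (B i) = m + (d - Suc i)"
| "compile_tm m pv d (P j) = pv j"

fun compile :: "nat \<Rightarrow> (nat \<Rightarrow> nat) \<Rightarrow> nat \<Rightarrow> df \<Rightarrow> fm" where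
  "compile m pv d (DMem s t) = Mem (compile_tm m pv d s) (compile_tm m pv d t)"
| "compile m pv d (DEq s t) = Eq (compile_tm m pv d s) (compile_tm m pv d t)"
| "compile m pv d (DNeg f) = Neg (compile m pv d f)"
| "compile m pv d (DConj f g) = Conj (compile m pv d f) (compile m pv d g)"
| "compile m pv d (DEx f) = Ex (m + d) (compile m pv (Suc d) f)"

lemma val_compile_tm:
  assumes "tm_closed d t" "\<forall>i<d. e i = \<rho> (m + (d - Suc i))" "\<forall>j\<in>tm_params t. \<rho> (pv j) = p j"
  shows "\<rho> (compile_tm m pv d t) = tval e p t"
  using assms by (cases t) auto

lemma sat_compile:
  assumes "closed d f" "\<forall>i<d. e i = \<rho> (m + (d - Suc i))"
    "\<forall>j\<in>params f. \<rho> (pv j) = p j" "\<forall>j\<in>params f. pv j < m"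
  shows "sat M \<rho> (compile m pv d f) = dsat M e p f"
  using assms
proof (induction f arbitrary: d e \<rho>)
  case (DMem s t)
  then show ?case using val_compile_tm[of d s e \<rho> m pv p] val_compile_tm[of d t e \<rho> m pv p] by simp
next
  case (DEq s t)
  then show ?case using val_compile_tm[of d s e \<rho> m pv p] val_compile_tm[of d t e \<rho> m pv p] by simp
next
  case (DConj f g)
  then show ?case by (metis Un_iff closed.simps(4) compile.simps(4) dsat.simps(4) params.simps(4) sat.simps(4))
next
  case (DEx f)
  have "sat M (\<rho>(m + d := a)) (compile m pv (Suc d) f) = dsat M (a ## e) p f" for a
  proof (rule DEx.IH)
    show "\<forall>i<Suc d. (a ## e) i = (\<rho>(m + d := a)) (m + (Suc d - Suc i))"
      using DEx.prems(2) by (auto simp: less_Suc_eq_0_disj)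
  qed (use DEx.prems in auto)
  then show ?case by simp
qed simp

lemma fv_compile:
  "closed d f \<Longrightarrow> fv (compile m pv d f) \<subseteq> {m..<m + d} \<union> pv ` params f"
proof (induction f arbitrary: d)
  case (DMem s t) then show ?case by (cases s; cases t) auto
next
  case (DEq s t) then show ?case by (cases s; cases t) auto
next
  case (DEx f)
  then have "fv (compile m pv (Suc d) f) \<subseteq> {m..<m + Suc d} \<union> pv ` params f"
    by (intro DEx.IH) simp
  then show ?case by auto
next
  case (DConj f g)
  then show ?case by (simp add: image_Un) blast
qed auto

fun tm_param_bound :: "tm \<Rightarrow> nat" where
  "tm_param_bound (B i) = 0"
| "tm_param_bound (P j) = Suc j"

fun param_bound :: "df \<Rightarrow> nat" where
  "param_bound (DMem s t) = max (tm_param_bound s) (tm_param_bound t)"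
| "param_bound (DEq s t) = max (tm_param_bound s) (tm_param_bound t)"
| "param_bound (DNeg f) = param_bound f"
| "param_bound (DConj f g) = max (param_bound f) (param_bound g)"
| "param_bound (DEx f) = param_bound f"

lemma params_less_param_bound: "j \<in> params f \<Longrightarrow> j < param_bound f"
proof (induction f)
  case (DMem s t) then show ?case by (cases s; cases t) auto
next
  case (DEq s t) then show ?case by (cases s; cases t) auto
qed auto

section \<open>Definable predicates\<close>

text \<open>\<open>S\<close> constrains the parameters: \<open>\<lambda>_. True\<close> for arbitrary ones, \<open>st\<close> for standard ones.
  Since \<open>f\<close> is closed at depth 1, the tail of the environment is irrelevant.\<close>

definition definable :: "('u \<Rightarrow> 'u \<Rightarrow> bool) \<Rightarrow> ('u \<Rightarrow> bool) \<Rightarrow> ('u \<Rightarrow> bool) \<Rightarrow> bool" where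
  "definable M S Q \<longleftrightarrow>
     (\<exists>f p. closed 1 f \<and> (\<forall>j\<in>params f. S (p j)) \<and> (\<forall>x. Q x = dsat M (x ## undefined) p f))"

lemma definableI:
  assumes "closed 1 f" "\<forall>j\<in>params f. S (p j)" "\<And>x. Q x = dsat M (x ## e) p f"
  shows "definable M S Q"
  unfolding definable_def
proof (intro exI conjI allI)
  fix x
  show "Q x = dsat M (x ## undefined) p f"
    using assms(3) dsat_cong[OF assms(1), of "x ## e" "x ## undefined" p p M] by simp
qed (use assms in auto)

lemma definable_mono: "definable M S Q \<Longrightarrow> (\<And>x. S x \<Longrightarrow> S' x) \<Longrightarrow> definable M S' Q"
  unfolding definable_def by blast

lemma definable_sat:
  assumes "definable M S Q"
  shows "\<exists>\<phi> \<rho> k. (\<forall>v\<in>fv \<phi> - {k}. S (\<rho> v)) \<and> (\<forall>x. Q x = sat M (\<rho>(k := x)) \<phi>)"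
proof -
  obtain f p where f: "closed 1 f" "\<forall>j\<in>params f. S (p j)" "\<And>x. Q x = dsat M (x ## undefined) p f"
    using assms unfolding definable_def by blast
  define m where "m = param_bound f"
  have "sat M (p(m := x)) (compile m id 1 f) = dsat M (x ## undefined) p f" for x
    by (rule sat_compile[OF f(1)]) (use params_less_param_bound in \<open>auto simp: m_def\<close>)
  then have "Q x = sat M (p(m := x)) (compile m id 1 f)" for x
    using f(3) by simp
  moreover have "\<forall>v\<in>fv (compile m id 1 f) - {m}. S (p v)"
    using fv_compile[OF f(1), of m id] f(2) by auto
  ultimately show ?thesis by blast
qed

lemma definable_Not: "definable M S Q \<Longrightarrow> definable M S (\<lambda>x. \<not> Q x)"
  unfolding definable_def by (metis closed.simps(3) dsat.simps(3) params.simps(3))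

lemma definable_extension:
  assumes "definable M S Q" "S a"
  shows "definable M S (\<lambda>y. \<forall>x. M x y \<longleftrightarrow> M x a \<and> Q x)"
proof -
  obtain f p where f: "closed 1 f" "\<forall>j\<in>params f. S (p j)" "\<And>x. Q x = dsat M (x ## undefined) p f"
    using assms(1) unfolding definable_def by blast
  define k where "k = param_bound f"
  have "dsat M (x ## y ## e) (p(k := a)) f = dsat M (x ## undefined) p f" for x y e
    by (rule dsat_cong[OF f(1)]) (use params_less_param_bound in \<open>auto simp: k_def\<close>)
  then have "(\<forall>x. M x y \<longleftrightarrow> M x a \<and> Q x) =
      dsat M (y ## e) (p(k := a)) (DAll (DIff (DMem (B 0) (B 1)) (DConj (DMem (B 0) (P k)) f)))" for y e
    using f(3) by auto
  moreover have "closed 1 (DAll (DIff (DMem (B 0) (B 1)) (DConj (DMem (B 0) (P k)) f)))"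
    using closed_mono[OF f(1)] by simp
  moreover have "\<forall>j\<in>params (DAll (DIff (DMem (B 0) (B 1)) (DConj (DMem (B 0) (P k)) f))). S ((p(k := a)) j)"
    using f(2) assms(2) by auto
  ultimately show ?thesis by (intro definableI) blast+
qed

locale zf =
  fixes M :: "'u \<Rightarrow> 'u \<Rightarrow> bool"
  assumes zf: "zf_model M"
begin

abbreviation "N \<equiv> nat_zf M"

lemma zf_axioms:
  "(\<forall>a b. (\<forall>x. M x a \<longleftrightarrow> M x b) \<longrightarrow> a = b) \<and>
   (\<forall>a. (\<exists>x. M x a) \<longrightarrow> (\<exists>x. M x a \<and> \<not> (\<exists>y. M y x \<and> M y a))) \<and>
   (\<forall>a b. \<exists>c. \<forall>x. M x c \<longleftrightarrow> x = a \<or> x = b) \<and>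
   (\<forall>a. \<exists>c. \<forall>x. M x c \<longleftrightarrow> (\<exists>y. M y a \<and> M x y)) \<and>
   (\<exists>w. inductive_set_zf M w) \<and>
   (\<forall>\<phi> \<rho> k a. \<exists>b. \<forall>x. M x b \<longleftrightarrow> M x a \<and> sat M (\<rho>(k := x)) \<phi>)"
  using zf unfolding zf_model_def by (elim conjE) (intro conjI; assumption)

lemma extensionality: "(\<And>z. M z a \<longleftrightarrow> M z b) \<Longrightarrow> a = b"
  using zf_axioms[THEN conjunct1, rule_format, of a b] by blast

lemma foundation: "M x a \<Longrightarrow> \<exists>x. M x a \<and> \<not> (\<exists>y. M y x \<and> M y a)"
  using zf_axioms[THEN conjunct2, THEN conjunct1, rule_format, of a] by blast

lemma pairing: "\<exists>c. \<forall>x. M x c \<longleftrightarrow> x = a \<or> x = b"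
  using zf_axioms[THEN conjunct2, THEN conjunct2, THEN conjunct1] by blast

lemma union: "\<exists>c. \<forall>x. M x c \<longleftrightarrow> (\<exists>y. M y a \<and> M x y)"
  using zf_axioms[THEN conjunct2, THEN conjunct2, THEN conjunct2, THEN conjunct1] by blast

lemma infinity: "\<exists>w. inductive_set_zf M w"
  using zf_axioms[THEN conjunct2, THEN conjunct2, THEN conjunct2, THEN conjunct2, THEN conjunct1] .

lemma separation: "\<exists>b. \<forall>x. M x b \<longleftrightarrow> M x a \<and> sat M (\<rho>(k := x)) \<phi>"
  using zf_axioms[THEN conjunct2, THEN conjunct2, THEN conjunct2, THEN conjunct2, THEN conjunct2] by blast

lemma separation_definable:
  assumes "definable M S Q"
  shows "\<exists>b. \<forall>x. M x b \<longleftrightarrow> M x a \<and> Q x"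
proof -
  obtain \<phi> \<rho> k where "\<forall>x. Q x = sat M (\<rho>(k := x)) \<phi>"
    using definable_sat[OF assms] by blast
  then show ?thesis using separation[of a \<rho> k \<phi>] by (simp only:)
qed

definition set_of :: "('u \<Rightarrow> bool) \<Rightarrow> 'u" where
  "set_of Q = (THE c. \<forall>z. M z c \<longleftrightarrow> Q z)"

lemma mem_set_of:
  assumes "\<exists>c. \<forall>z. M z c \<longleftrightarrow> Q z"
  shows "M z (set_of Q) \<longleftrightarrow> Q z"
proof -
  obtain c where c: "\<forall>z. M z c \<longleftrightarrow> Q z" using assms by blast
  have unique: "d = c" if "\<forall>z. M z d \<longleftrightarrow> Q z" for d
    by (rule extensionality) (use that c in blast)
  have "\<forall>z. M z (set_of Q) \<longleftrightarrow> Q z"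
    unfolding set_of_def by (rule theI[of _ c]) (use c unique in blast)+
  then show ?thesis by blast
qed

definition "emp = set_of (\<lambda>z. False)"
definition "upair a b = set_of (\<lambda>z. z = a \<or> z = b)"
definition "union2 a b = set_of (\<lambda>z. M z a \<or> M z b)"
definition "succ x = union2 x (upair x x)"
definition "kpair a b = upair (upair a a) (upair a b)"
definition "triple a b c = kpair (kpair a b) c"

lemma mem_emp [simp]: "\<not> M z emp"
proof -
  obtain a where "inductive_set_zf M a" using infinity by blast
  obtain b where "\<forall>x. M x b \<longleftrightarrow> M x a \<and> sat M (\<rho>(0 := x)) (Neg (Eq 0 0))"
    using separation[of a \<rho> 0 "Neg (Eq 0 0)"] by blast
  then have "\<exists>c. \<forall>z. M z c \<longleftrightarrow> False" by (intro exI[of _ b]) simp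
  then show ?thesis unfolding emp_def using mem_set_of[of "\<lambda>z. False"] by simp
qed

lemma mem_upair [simp]: "M z (upair a b) \<longleftrightarrow> z = a \<or> z = b"
  unfolding upair_def by (rule mem_set_of) (rule pairing)

lemma mem_union2 [simp]: "M z (union2 a b) \<longleftrightarrow> M z a \<or> M z b"
proof -
  obtain c where "\<forall>x. M x c \<longleftrightarrow> (\<exists>y. M y (upair a b) \<and> M x y)" using union[of "upair a b"] by blast
  then have "\<forall>z. M z c \<longleftrightarrow> M z a \<or> M z b" by auto
  then show ?thesis unfolding union2_def by (intro mem_set_of) blast
qed

lemma mem_succ [simp]: "M z (succ x) \<longleftrightarrow> M z x \<or> z = x"
  unfolding succ_def by auto

lemma eq_emp_iff: "e = emp \<longleftrightarrow> (\<forall>z. \<not> M z e)"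
  using extensionality[of e emp] by auto

lemma eq_upair_iff: "c = upair a b \<longleftrightarrow> (\<forall>z. M z c \<longleftrightarrow> z = a \<or> z = b)"
  using extensionality[of c "upair a b"] by auto

lemma eq_succ_iff: "s = succ x \<longleftrightarrow> (\<forall>z. M z s \<longleftrightarrow> M z x \<or> z = x)"
  using extensionality[of s "succ x"] by auto

lemma upair_eq_upair:
  "upair a b = upair c d \<longleftrightarrow> (a = c \<and> b = d) \<or> (a = d \<and> b = c)"
proof
  assume "upair a b = upair c d"
  then have H: "\<forall>z. (z = a \<or> z = b) \<longleftrightarrow> (z = c \<or> z = d)"
    by (metis mem_upair)
  show "(a = c \<and> b = d) \<or> (a = d \<and> b = c)"
    using H[rule_format, of a] H[rule_format, of b] H[rule_format, of c] H[rule_format, of d] by auto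
next
  assume "(a = c \<and> b = d) \<or> (a = d \<and> b = c)"
  moreover have "upair d c = upair c d" by (rule extensionality) auto
  ultimately show "upair a b = upair c d" by auto
qed

lemma kpair_inject [simp]: "kpair a b = kpair c d \<longleftrightarrow> a = c \<and> b = d"
  unfolding kpair_def upair_eq_upair by auto

lemma triple_inject [simp]: "triple a b c = triple a' b' c' \<longleftrightarrow> a = a' \<and> b = b' \<and> c = c'"
  unfolding triple_def by simp

lemma succ_neq_emp [simp]: "succ x \<noteq> emp" "emp \<noteq> succ x"
proof -
  have "M x (succ x)" by simp
  then show "succ x \<noteq> emp" "emp \<noteq> succ x" using mem_emp[of x] by metis+
qed

lemma succ_inject [simp]: "succ x = succ y \<longleftrightarrow> x = y"
proof
  assume eq: "succ x = succ y"
  show "x = y"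
  proof (rule ccontr)
    assume "x \<noteq> y"
    moreover have "M x (succ y)" "M y (succ x)"
      using mem_succ[of x x] mem_succ[of y y] unfolding eq by simp_all
    ultimately have "M x y" "M y x" by auto
    moreover obtain m where "M m (upair x y)" "\<not> (\<exists>z. M z m \<and> M z (upair x y))"
      using foundation[of x "upair x y"] by auto
    ultimately show False by auto
  qed
qed simp

end

definition "EmptyD t = DAll (DNeg (DMem (B 0) (lift t)))"
definition "SuccD s x =
  DAll (DIff (DMem (B 0) (lift s)) (DOr (DMem (B 0) (lift x)) (DEq (B 0) (lift x))))"
definition "InductiveD w =
  DConj (DEx (DConj (DMem (B 0) (lift w)) (EmptyD (B 0))))
    (DAll (DImp (DMem (B 0) (lift w)) (DEx (DConj (DMem (B 0) (lift (lift w))) (SuccD (B 0) (B 1))))))"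

lemma closed_nat_macros [simp]:
  "closed d (EmptyD t) = tm_closed d t"
  "closed d (SuccD s x) = (tm_closed d s \<and> tm_closed d x)"
  "closed d (InductiveD w) = tm_closed d w"
  by (auto simp: EmptyD_def SuccD_def InductiveD_def)

lemma params_nat_macros [simp]:
  "params (EmptyD t) = tm_params t"
  "params (SuccD s x) = tm_params s \<union> tm_params x"
  "params (InductiveD w) = tm_params w"
  by (auto simp: EmptyD_def SuccD_def InductiveD_def)

context zf begin

lemma dsat_EmptyD [simp]: "dsat M e p (EmptyD t) \<longleftrightarrow> tval e p t = emp"
  by (auto simp: EmptyD_def eq_emp_iff)

lemma dsat_SuccD [simp]: "dsat M e p (SuccD s x) \<longleftrightarrow> tval e p s = succ (tval e p x)"
  by (auto simp: SuccD_def eq_succ_iff)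

lemma inductive_set_zf_iff: "inductive_set_zf M w \<longleftrightarrow> M emp w \<and> (\<forall>x. M x w \<longrightarrow> M (succ x) w)"
  unfolding inductive_set_zf_def eq_emp_iff[symmetric] eq_succ_iff[symmetric] by auto

lemma dsat_InductiveD [simp]: "dsat M e p (InductiveD w) \<longleftrightarrow> inductive_set_zf M (tval e p w)"
  unfolding inductive_set_zf_iff InductiveD_def by auto

definition "least_inductive w \<longleftrightarrow>
  inductive_set_zf M w \<and> (\<forall>z. inductive_set_zf M z \<longrightarrow> (\<forall>x. M x w \<longrightarrow> M x z))"

lemma least_inductive_exists: "\<exists>w. least_inductive w"
proof -
  obtain w where w: "inductive_set_zf M w" using infinity by blast
  have "definable M (\<lambda>_. True) (\<lambda>x. \<forall>z. inductive_set_zf M z \<longrightarrow> M x z)"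
    by (rule definableI[where f = "DAll (DImp (InductiveD (B 0)) (DMem (B 1) (B 0)))"]) auto
  then obtain n where n: "\<forall>x. M x n \<longleftrightarrow> M x w \<and> (\<forall>z. inductive_set_zf M z \<longrightarrow> M x z)"
    using separation_definable by blast
  then have "inductive_set_zf M n" using w by (auto simp: inductive_set_zf_iff)
  then show ?thesis using n unfolding least_inductive_def by blast
qed

lemma least_inductive_unique: "least_inductive w \<Longrightarrow> least_inductive w' \<Longrightarrow> w = w'"
  unfolding least_inductive_def by (blast intro: extensionality)

lemma least_inductive_N: "least_inductive N"
proof -
  obtain w where w: "least_inductive w" using least_inductive_exists by blast
  have "N = w" unfolding nat_zf_def least_inductive_def[symmetric]
    by (rule the_equality) (use w least_inductive_unique in auto)
  then show ?thesis using w by simp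
qed

lemma emp_in_N [simp]: "M emp N"
  and succ_in_N [simp]: "M x N \<Longrightarrow> M (succ x) N"
  using least_inductive_N unfolding least_inductive_def inductive_set_zf_iff by blast+

lemma nat_induct_definable [consumes 1, case_names definable zero succ]:
  assumes "M x N" "definable M (\<lambda>_. True) Q" "Q emp" "\<And>x. M x N \<Longrightarrow> Q x \<Longrightarrow> Q (succ x)"
  shows "Q x"
proof -
  obtain D where D: "\<forall>x. M x D \<longleftrightarrow> M x N \<and> Q x"
    using separation_definable[OF assms(2)] by blast
  then have "inductive_set_zf M D"
    using assms(3,4) unfolding inductive_set_zf_iff by simp
  then have "M x D"
    using least_inductive_N assms(1) unfolding least_inductive_def by blast
  then show ?thesis using D by blast
qed

end

section \<open>Relations defined by recursion on the natural numbers\<close>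

definition "UpairD z a b =
  DAll (DIff (DMem (B 0) (lift z)) (DOr (DEq (B 0) (lift a)) (DEq (B 0) (lift b))))"
definition "KpairD q a b =
  DAll (DIff (DMem (B 0) (lift q)) (DOr (UpairD (B 0) (lift a) (lift a)) (UpairD (B 0) (lift a) (lift b))))"
definition "TripleD t a b c = DEx (DConj (KpairD (B 0) (lift a) (lift b)) (KpairD (lift t) (B 0) (lift c)))"
definition "TripleInD a b c F = DEx (DConj (TripleD (B 0) (lift a) (lift b) (lift c)) (DMem (B 0) (lift F)))"

text \<open>\<open>RecGraphD nT bf rf s t u\<close> expresses \<open>rec_graph\<close> below: \<open>nT\<close> denotes \<open>N\<close>, \<open>bf\<close> is a formula in
  three bound variables (the base case) and \<open>rf\<close> one in six (a step from the first triple to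
  the second).\<close>

definition "RecGraphD nT bf rf s t u =
  DEx (DConj (TripleInD (lift s) (lift t) (lift u) (B 0))
   (DAll (DImp (DMem (B 0) (B 1)) (DEx (DEx (DEx (
      DConj (TripleD (B 3) (B 2) (B 1) (B 0))
     (DConj (DMem (B 2) (lift (lift (lift (lift (lift nT))))))
     (DConj (DMem (B 1) (lift (lift (lift (lift (lift nT))))))
     (DConj (DMem (B 0) (lift (lift (lift (lift (lift nT))))))
      (DOr bf (DEx (DEx (DEx (DConj (TripleInD (B 2) (B 1) (B 0) (B 7)) rf)))))))))))))))"

lemma closed_triple_macros [simp]:
  "closed d (UpairD z a b) = (tm_closed d z \<and> tm_closed d a \<and> tm_closed d b)"
  "closed d (KpairD q a b) = (tm_closed d q \<and> tm_closed d a \<and> tm_closed d b)"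
  "closed d (TripleD t a b c) = (tm_closed d t \<and> tm_closed d a \<and> tm_closed d b \<and> tm_closed d c)"
  "closed d (TripleInD a b c F) = (tm_closed d a \<and> tm_closed d b \<and> tm_closed d c \<and> tm_closed d F)"
  by (auto simp: UpairD_def KpairD_def TripleD_def TripleInD_def)

lemma params_triple_macros [simp]:
  "params (UpairD z a b) = tm_params z \<union> tm_params a \<union> tm_params b"
  "params (KpairD q a b) = tm_params q \<union> tm_params a \<union> tm_params b"
  "params (TripleD t a b c) = tm_params t \<union> tm_params a \<union> tm_params b \<union> tm_params c"
  "params (TripleInD a b c F) = tm_params a \<union> tm_params b \<union> tm_params c \<union> tm_params F"
  by (auto simp: UpairD_def KpairD_def TripleD_def TripleInD_def)

lemma closed_RecGraphD [simp]:
  "closed 3 bf \<Longrightarrow> closed 6 rf \<Longrightarrow>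
   closed d (RecGraphD nT bf rf s t u) = (tm_closed d nT \<and> tm_closed d s \<and> tm_closed d t \<and> tm_closed d u)"
  unfolding RecGraphD_def using closed_mono[of 3 bf] closed_mono[of 6 rf] by auto

lemma params_RecGraphD [simp]:
  "params (RecGraphD nT bf rf s t u) =
     tm_params nT \<union> tm_params s \<union> tm_params t \<union> tm_params u \<union> params bf \<union> params rf"
  unfolding RecGraphD_def by auto

context zf begin

lemma dsat_UpairD [simp]: "dsat M e p (UpairD z a b) \<longleftrightarrow> tval e p z = upair (tval e p a) (tval e p b)"
  by (auto simp: UpairD_def eq_upair_iff)

lemma dsat_KpairD [simp]: "dsat M e p (KpairD q a b) \<longleftrightarrow> tval e p q = kpair (tval e p a) (tval e p b)"
  by (auto simp: KpairD_def kpair_def eq_upair_iff)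

lemma dsat_TripleD [simp]:
  "dsat M e p (TripleD t a b c) \<longleftrightarrow> tval e p t = triple (tval e p a) (tval e p b) (tval e p c)"
  by (auto simp: TripleD_def triple_def)

lemma dsat_TripleInD [simp]:
  "dsat M e p (TripleInD a b c F) \<longleftrightarrow> M (triple (tval e p a) (tval e p b) (tval e p c)) (tval e p F)"
  by (auto simp: TripleInD_def)

text \<open>Witnessing sets \<open>F\<close>, each member justified by \<open>bs\<close> or by an \<open>rs\<close>-step from another member,
  make the recursion expressible by a single \<in>-formula.\<close>

definition "rec_approx bs rs F \<longleftrightarrow>
  (\<forall>t. M t F \<longrightarrow> (\<exists>x y z. t = triple x y z \<and> M x N \<and> M y N \<and> M z N \<and>
      (bs x y z \<or> (\<exists>x' y' z'. M (triple x' y' z') F \<and> rs x' y' z' x y z))))"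

definition "rec_graph bs rs a b c \<longleftrightarrow> (\<exists>F. M (triple a b c) F \<and> rec_approx bs rs F)"

lemma rec_graph_base: "bs x y z \<Longrightarrow> M x N \<Longrightarrow> M y N \<Longrightarrow> M z N \<Longrightarrow> rec_graph bs rs x y z"
  unfolding rec_graph_def rec_approx_def by (rule exI[of _ "upair (triple x y z) (triple x y z)"]) auto

lemma rec_graph_step:
  assumes "rec_graph bs rs x' y' z'" "rs x' y' z' x y z" "M x N" "M y N" "M z N"
  shows "rec_graph bs rs x y z"
proof -
  obtain F where F: "M (triple x' y' z') F" "rec_approx bs rs F"
    using assms(1) unfolding rec_graph_def by blast
  define G where "G = union2 F (upair (triple x y z) (triple x y z))"
  have "rec_approx bs rs G"
    unfolding rec_approx_def
  proof (intro allI impI)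
    fix t assume "M t G"
    then consider "M t F" | "t = triple x y z" by (auto simp: G_def)
    then show "\<exists>x y z. t = triple x y z \<and> M x N \<and> M y N \<and> M z N \<and>
      (bs x y z \<or> (\<exists>x' y' z'. M (triple x' y' z') G \<and> rs x' y' z' x y z))"
    proof cases
      case 1
      then obtain a b c where abc: "t = triple a b c" "M a N" "M b N" "M c N"
        "bs a b c \<or> (\<exists>x' y' z'. M (triple x' y' z') F \<and> rs x' y' z' a b c)"
        using F(2) unfolding rec_approx_def by blast
      have "bs a b c \<or> (\<exists>x' y' z'. M (triple x' y' z') G \<and> rs x' y' z' a b c)"
        using abc(5) unfolding G_def by auto
      then show ?thesis using abc(1-4) by blast
    next
      case 2
      moreover have "M (triple x' y' z') G" using F(1) by (simp add: G_def)
      ultimately show ?thesis using assms(2-5) by blast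
    qed
  qed
  moreover have "M (triple x y z) G" by (simp add: G_def)
  ultimately show ?thesis unfolding rec_graph_def by blast
qed

lemma rec_graph_cases:
  assumes "rec_graph bs rs x y z"
  shows "M x N \<and> M y N \<and> M z N \<and>
    (bs x y z \<or> (\<exists>x' y' z'. rec_graph bs rs x' y' z' \<and> rs x' y' z' x y z))"
proof -
  obtain F where F: "M (triple x y z) F" "rec_approx bs rs F"
    using assms unfolding rec_graph_def by blast
  then obtain a b c where "triple x y z = triple a b c" "M a N" "M b N" "M c N"
    "bs a b c \<or> (\<exists>x' y' z'. M (triple x' y' z') F \<and> rs x' y' z' a b c)"
    unfolding rec_approx_def by blast
  moreover from this(1) have "x = a" "y = b" "z = c" by simp_all
  ultimately show ?thesis using F unfolding rec_graph_def by blast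
qed

lemma dsat_RecGraphD:
  assumes "closed 3 bf" "closed 6 rf" "tval e p nT = N"
  shows "dsat M e p (RecGraphD nT bf rf s t u) \<longleftrightarrow>
    rec_graph (\<lambda>x y z. dsat M (z ## y ## x ## e) p bf)
      (\<lambda>x' y' z' x y z. dsat M (z' ## y' ## x' ## z ## y ## x ## e) p rf)
      (tval e p s) (tval e p t) (tval e p u)"
proof -
  have base: "dsat M (z ## y ## x ## e') p bf = dsat M (z ## y ## x ## e) p bf" for x y z e'
    by (rule dsat_cong[OF assms(1)]) (auto simp: less_Suc_eq numeral_3_eq_3)
  have step: "dsat M (z' ## y' ## x' ## z ## y ## x ## e') p rf =
      dsat M (z' ## y' ## x' ## z ## y ## x ## e) p rf" for x y z x' y' z' e'
    by (rule dsat_cong[OF assms(2)]) (auto simp: less_Suc_eq numeral_eq_Suc)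
  show ?thesis
    unfolding RecGraphD_def rec_graph_def rec_approx_def
    by (simp add: assms(3)) (subst base, subst step, blast)
qed

end

section \<open>Addition and the Cantor pairing\<close>

definition "AllEmpD = DConj (EmptyD (B 2)) (DConj (EmptyD (B 1)) (EmptyD (B 0)))"
definition "PlusStepD =
  DConj (SuccD (B 3) (B 0))
   (DOr (DConj (SuccD (B 5) (B 2)) (DEq (B 4) (B 1))) (DConj (DEq (B 5) (B 2)) (SuccD (B 4) (B 1))))"
definition "CantorStepD =
  DConj (SuccD (B 3) (B 0))
   (DOr (DConj (SuccD (B 1) (B 4)) (SuccD (B 5) (B 2)))
        (DConj (EmptyD (B 1)) (DConj (EmptyD (B 5)) (SuccD (B 4) (B 2)))))"
definition "PlusD nT s t u = RecGraphD nT AllEmpD PlusStepD s t u"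
definition "CantorD nT s t u = RecGraphD nT AllEmpD CantorStepD s t u"

lemma closed_step_formulas [simp]: "closed 3 AllEmpD" "closed 6 PlusStepD" "closed 6 CantorStepD"
  by (auto simp: AllEmpD_def PlusStepD_def CantorStepD_def)

lemma params_step_formulas [simp]: "params AllEmpD = {}" "params PlusStepD = {}" "params CantorStepD = {}"
  by (auto simp: AllEmpD_def PlusStepD_def CantorStepD_def)

lemma closed_PlusD_CantorD [simp]:
  "closed d (PlusD nT s t u) = (tm_closed d nT \<and> tm_closed d s \<and> tm_closed d t \<and> tm_closed d u)"
  "closed d (CantorD nT s t u) = (tm_closed d nT \<and> tm_closed d s \<and> tm_closed d t \<and> tm_closed d u)"
  by (simp_all add: PlusD_def CantorD_def)

lemma params_PlusD_CantorD [simp]: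
  "params (PlusD nT s t u) = tm_params nT \<union> tm_params s \<union> tm_params t \<union> tm_params u"
  "params (CantorD nT s t u) = tm_params nT \<union> tm_params s \<union> tm_params t \<union> tm_params u"
  by (simp_all add: PlusD_def CantorD_def)

context zf begin

definition "all_emp x y z \<longleftrightarrow> x = emp \<and> y = emp \<and> z = emp"
definition "plus_step x' y' z' x y z \<longleftrightarrow>
  z = succ z' \<and> ((x = succ x' \<and> y = y') \<or> (x = x' \<and> y = succ y'))"

text \<open>Successive codes enumerate \<open>N \<times> N\<close> along the anti-diagonals:
  \<open>(0,0), (0,1), (1,0), (0,2), (1,1), (2,0), \<dots>\<close>\<close>

definition "cantor_step x' y' z' x y z \<longleftrightarrow>
  z = succ z' \<and> ((y' = succ y \<and> x = succ x') \<or> (y' = emp \<and> x = emp \<and> y = succ x'))"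

abbreviation "plus_graph \<equiv> rec_graph all_emp plus_step"
abbreviation "cantor_graph \<equiv> rec_graph all_emp cantor_step"

lemma dsat_PlusD [simp]:
  "tval e p nT = N \<Longrightarrow> dsat M e p (PlusD nT s t u) = plus_graph (tval e p s) (tval e p t) (tval e p u)"
proof -
  assume "tval e p nT = N"
  moreover have "(\<lambda>x y z. dsat M (z ## y ## x ## e) p AllEmpD) = all_emp"
    by (auto simp: fun_eq_iff all_emp_def AllEmpD_def)
  moreover have "(\<lambda>x' y' z' x y z. dsat M (z' ## y' ## x' ## z ## y ## x ## e) p PlusStepD) = plus_step"
    by (auto simp: fun_eq_iff plus_step_def PlusStepD_def)
  ultimately show ?thesis unfolding PlusD_def by (simp add: dsat_RecGraphD)
qed

lemma dsat_CantorD [simp]: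
  "tval e p nT = N \<Longrightarrow> dsat M e p (CantorD nT s t u) = cantor_graph (tval e p s) (tval e p t) (tval e p u)"
proof -
  assume "tval e p nT = N"
  moreover have "(\<lambda>x y z. dsat M (z ## y ## x ## e) p AllEmpD) = all_emp"
    by (auto simp: fun_eq_iff all_emp_def AllEmpD_def)
  moreover have "(\<lambda>x' y' z' x y z. dsat M (z' ## y' ## x' ## z ## y ## x ## e) p CantorStepD) = cantor_step"
    by (auto simp: fun_eq_iff cantor_step_def CantorStepD_def)
  ultimately show ?thesis unfolding CantorD_def by (simp add: dsat_RecGraphD)
qed

lemma plus_graph_in_N: "plus_graph x y z \<Longrightarrow> M x N \<and> M y N \<and> M z N"
  and cantor_graph_in_N: "cantor_graph x y z \<Longrightarrow> M x N \<and> M y N \<and> M z N"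
  using rec_graph_cases by blast+

lemma plus_graph_emp_left: "M s N \<Longrightarrow> plus_graph emp s s"
proof (induction s rule: nat_induct_definable)
  case definable
  show ?case by (rule definableI[where f = "PlusD (P 0) (P 1) (B 0) (B 0)" and p = "nth [N, emp]"]) simp_all
next
  case zero
  show ?case by (rule rec_graph_base) (simp_all add: all_emp_def)
next
  case (succ s)
  show ?case by (rule rec_graph_step[of _ _ emp s s]) (use succ in \<open>simp_all add: plus_step_def\<close>)
qed

lemma plus_graph_emp_right: "M s N \<Longrightarrow> plus_graph s emp s"
proof (induction s rule: nat_induct_definable)
  case definable
  show ?case by (rule definableI[where f = "PlusD (P 0) (B 0) (P 1) (B 0)" and p = "nth [N, emp]"]) simp_all
next
  case zero
  show ?case by (rule rec_graph_base) (simp_all add: all_emp_def)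
next
  case (succ s)
  show ?case by (rule rec_graph_step[of _ _ s emp s]) (use succ in \<open>simp_all add: plus_step_def\<close>)
qed

lemma plus_graph_total: "M a N \<Longrightarrow> \<forall>b. M b N \<longrightarrow> (\<exists>s. plus_graph a b s)"
proof (induction a rule: nat_induct_definable)
  case definable
  show ?case
    by (rule definableI[where f = "DAll (DImp (DMem (B 0) (P 0)) (DEx (PlusD (P 0) (B 2) (B 1) (B 0))))"
          and p = "nth [N]"]) simp_all
next
  case zero
  show ?case using plus_graph_emp_left by blast
next
  case (succ a)
  show ?case
  proof (intro allI impI)
    fix b assume b: "M b N"
    then obtain s where s: "plus_graph a b s" using succ.IH by blast
    have "plus_graph (succ a) b (succ s)"
      by (rule rec_graph_step[OF s]) (use succ.hyps b plus_graph_in_N[OF s] in \<open>simp_all add: plus_step_def\<close>)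
    then show "\<exists>s. plus_graph (succ a) b s" by blast
  qed
qed

lemma plus_graph_emp_left_unique: "M s N \<Longrightarrow> \<forall>b. plus_graph emp b s \<longrightarrow> b = s"
proof (induction s rule: nat_induct_definable)
  case definable
  show ?case
    by (rule definableI[where f = "DAll (DImp (PlusD (P 0) (P 1) (B 0) (B 1)) (DEq (B 0) (B 1)))"
          and p = "nth [N, emp]"]) simp_all
next
  case zero
  show ?case
  proof (intro allI impI)
    fix b assume "plus_graph emp b emp"
    from rec_graph_cases[OF this] show "b = emp" by (auto simp: all_emp_def plus_step_def)
  qed
next
  case (succ s)
  show ?case
  proof (intro allI impI)
    fix b assume "plus_graph emp b (succ s)"
    from rec_graph_cases[OF this] obtain x' y' z' where
      "plus_graph x' y' z'" "plus_step x' y' z' emp b (succ s)"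
      by (auto simp: all_emp_def)
    moreover from this(2) have "x' = emp" "z' = s" "b = succ y'" by (auto simp: plus_step_def)
    ultimately show "b = succ s" using succ.IH by simp
  qed
qed

lemma plus_graph_shift: "M s N \<Longrightarrow> \<forall>a b. plus_graph (succ a) b s \<longrightarrow> plus_graph a (succ b) s"
proof (induction s rule: nat_induct_definable)
  case definable
  show ?case
    by (rule definableI[where f = "DAll (DAll (DImp
          (DEx (DConj (SuccD (B 0) (B 2)) (PlusD (P 0) (B 0) (B 1) (B 3))))
          (DEx (DConj (SuccD (B 0) (B 1)) (PlusD (P 0) (B 2) (B 0) (B 3))))))"
          and p = "nth [N]"]) simp_all
next
  case zero
  show ?case
  proof (intro allI impI)
    fix a b assume "plus_graph (succ a) b emp"
    from rec_graph_cases[OF this] show "plus_graph a (succ b) emp" by (auto simp: all_emp_def plus_step_def)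
  qed
next
  case (succ s)
  show ?case
  proof (intro allI impI)
    fix a b assume "plus_graph (succ a) b (succ s)"
    from rec_graph_cases[OF this] obtain x' y' z' where
      r: "plus_graph x' y' z'" "plus_step x' y' z' (succ a) b (succ s)" and b: "M b N"
      by (auto simp: all_emp_def)
    then have z': "z' = s" by (simp add: plus_step_def)
    consider "x' = a" "b = y'" | "x' = succ a" "b = succ y'"
      using r(2) by (auto simp: plus_step_def)
    then show "plus_graph a (succ b) (succ s)"
    proof cases
      case 1
      with r(1) z' have ab: "plus_graph a b s" by simp
      show ?thesis
        by (rule rec_graph_step[OF ab]) (use plus_graph_in_N[OF ab] succ.hyps in \<open>simp_all add: plus_step_def\<close>)
    next
      case 2
      with r(1) z' succ.IH have ab: "plus_graph a (succ y') s" by simp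
      show ?thesis
        by (rule rec_graph_step[OF ab])
          (use plus_graph_in_N[OF ab] succ.hyps b 2 in \<open>simp_all add: plus_step_def\<close>)
    qed
  qed
qed

lemma cantor_step_succ: "cantor_step x' y' z' x y z \<Longrightarrow> z = succ z' \<and> \<not> (x = emp \<and> y = emp)"
  by (auto simp: cantor_step_def)

lemma cantor_step_functional:
  "cantor_step x' y' z' a b c \<Longrightarrow> cantor_step x' y' z' a' b' c' \<Longrightarrow> a = a' \<and> b = b'"
  by (auto simp: cantor_step_def)

lemma cantor_step_injective:
  "cantor_step x1 y1 z1 a b c \<Longrightarrow> cantor_step x2 y2 z2 a b c' \<Longrightarrow> x1 = x2 \<and> y1 = y2"
  by (auto simp: cantor_step_def)

lemma cantor_graph_emp: "cantor_graph a b emp \<longleftrightarrow> a = emp \<and> b = emp"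
proof
  assume "cantor_graph a b emp"
  from rec_graph_cases[OF this] show "a = emp \<and> b = emp"
    by (auto simp: all_emp_def cantor_step_def)
qed (simp add: rec_graph_base all_emp_def)

lemma cantor_graph_succ:
  assumes "cantor_graph a b (succ c)"
  obtains x' y' where "cantor_graph x' y' c" "cantor_step x' y' c a b (succ c)"
proof -
  from rec_graph_cases[OF assms] obtain x' y' z' where
    "cantor_graph x' y' z'" "cantor_step x' y' z' a b (succ c)"
    by (auto simp: all_emp_def)
  moreover from this(2) have "z' = c" by (simp add: cantor_step_def)
  ultimately show thesis using that by simp
qed

lemma cantor_graph_left_unique:
  "M c N \<Longrightarrow> \<forall>a b a' b'. cantor_graph a b c \<longrightarrow> cantor_graph a' b' c \<longrightarrow> a = a' \<and> b = b'"
proof (induction c rule: nat_induct_definable)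
  case definable
  show ?case
    by (rule definableI[where f = "DAll (DAll (DAll (DAll (DImp (CantorD (P 0) (B 3) (B 2) (B 4))
          (DImp (CantorD (P 0) (B 1) (B 0) (B 4)) (DConj (DEq (B 3) (B 1)) (DEq (B 2) (B 0))))))))"
          and p = "nth [N]"]) simp_all
next
  case zero
  then show ?case by (simp add: cantor_graph_emp)
next
  case (succ c)
  show ?case
  proof (intro allI impI)
    fix a b a' b' assume "cantor_graph a b (succ c)" "cantor_graph a' b' (succ c)"
    then obtain x1 y1 x2 y2 where
      "cantor_graph x1 y1 c" "cantor_step x1 y1 c a b (succ c)"
      "cantor_graph x2 y2 c" "cantor_step x2 y2 c a' b' (succ c)"
      by (metis cantor_graph_succ)
    then show "a = a' \<and> b = b'" using succ.IH cantor_step_functional by metis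
  qed
qed

lemma cantor_graph_right_unique:
  "M c N \<Longrightarrow> \<forall>a b c'. cantor_graph a b c \<longrightarrow> cantor_graph a b c' \<longrightarrow> c = c'"
proof (induction c rule: nat_induct_definable)
  case definable
  show ?case
    by (rule definableI[where f = "DAll (DAll (DAll (DImp (CantorD (P 0) (B 2) (B 1) (B 3))
          (DImp (CantorD (P 0) (B 2) (B 1) (B 0)) (DEq (B 3) (B 0))))))"
          and p = "nth [N]"]) simp_all
next
  case zero
  show ?case
  proof (intro allI impI)
    fix a b c' assume "cantor_graph a b emp" "cantor_graph a b c'"
    then have "cantor_graph emp emp c'" by (simp add: cantor_graph_emp)
    from rec_graph_cases[OF this] show "emp = c'"
      by (auto simp: all_emp_def cantor_step_def)
  qed
next
  case (succ c)
  show ?case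
  proof (intro allI impI)
    fix a b c' assume ab: "cantor_graph a b (succ c)" and ab': "cantor_graph a b c'"
    obtain x1 y1 where 1: "cantor_graph x1 y1 c" "cantor_step x1 y1 c a b (succ c)"
      using cantor_graph_succ[OF ab] .
    from rec_graph_cases[OF ab'] cantor_step_succ[OF 1(2)] obtain x2 y2 z2 where
      2: "cantor_graph x2 y2 z2" "cantor_step x2 y2 z2 a b c'"
      by (auto simp: all_emp_def)
    have "x1 = x2 \<and> y1 = y2" using cantor_step_injective[OF 1(2) 2(2)] .
    then have "c = z2" using succ.IH 1(1) 2(1) by blast
    then show "succ c = c'" using cantor_step_succ[OF 2(2)] by simp
  qed
qed

lemma cantor_graph_total_on_diagonal:
  assumes s: "M s N" and start: "\<exists>c. cantor_graph emp s c"
  shows "M a N \<Longrightarrow> \<forall>b. plus_graph a b s \<longrightarrow> (\<exists>c. cantor_graph a b c)"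
proof (induction a rule: nat_induct_definable)
  case definable
  show ?case
    by (rule definableI[where f = "DAll (DImp (PlusD (P 0) (B 1) (B 0) (P 1)) (DEx (CantorD (P 0) (B 2) (B 1) (B 0))))"
          and p = "nth [N, s]"]) simp_all
next
  case zero
  then show ?case using plus_graph_emp_left_unique[OF s] start by blast
next
  case (succ a)
  show ?case
  proof (intro allI impI)
    fix b assume sum: "plus_graph (succ a) b s"
    then have "plus_graph a (succ b) s" using plus_graph_shift[OF s] by blast
    then obtain c where c: "cantor_graph a (succ b) c" using succ.IH by blast
    have "cantor_graph (succ a) b (succ c)"
      by (rule rec_graph_step[OF c])
        (use plus_graph_in_N[OF sum] cantor_graph_in_N[OF c] in \<open>simp_all add: cantor_step_def\<close>)
    then show "\<exists>c. cantor_graph (succ a) b c" by blast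
  qed
qed

lemma cantor_graph_emp_left_total: "M s N \<Longrightarrow> \<exists>c. cantor_graph emp s c"
proof (induction s rule: nat_induct_definable)
  case definable
  show ?case
    by (rule definableI[where f = "DEx (CantorD (P 0) (P 1) (B 1) (B 0))" and p = "nth [N, emp]"]) simp_all
next
  case zero
  then show ?case using cantor_graph_emp by blast
next
  case (succ s)
  obtain c where c: "cantor_graph s emp c"
    using cantor_graph_total_on_diagonal[OF succ.hyps succ.IH succ.hyps] plus_graph_emp_right[OF succ.hyps]
    by blast
  have "cantor_graph emp (succ s) (succ c)"
    by (rule rec_graph_step[OF c]) (use cantor_graph_in_N[OF c] in \<open>simp_all add: cantor_step_def\<close>)
  then show ?case by blast
qed

lemma cantor_graph_total: "M a N \<Longrightarrow> M b N \<Longrightarrow> \<exists>c. cantor_graph a b c"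
proof -
  assume a: "M a N" and b: "M b N"
  obtain s where s: "plus_graph a b s" using plus_graph_total[OF a] b by blast
  then have "M s N" using plus_graph_in_N by blast
  then show ?thesis
    using cantor_graph_total_on_diagonal[OF _ cantor_graph_emp_left_total a] s by blast
qed

definition "cantor a b = (THE c. cantor_graph a b c)"

lemma cantor_graph_cantor: "M a N \<Longrightarrow> M b N \<Longrightarrow> cantor_graph a b (cantor a b)"
proof -
  assume "M a N" "M b N"
  then obtain c where c: "cantor_graph a b c" using cantor_graph_total by blast
  have "c' = c" if "cantor_graph a b c'" for c'
    using cantor_graph_right_unique[of c] cantor_graph_in_N[OF c] c that by blast
  then show ?thesis unfolding cantor_def using c by (rule theI[rotated])
qed

lemma cantor_graph_iff: "cantor_graph a b c \<longleftrightarrow> M a N \<and> M b N \<and> c = cantor a b"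
proof
  assume c: "cantor_graph a b c"
  then have N: "M a N" "M b N" "M c N" using cantor_graph_in_N by blast+
  then have "c = cantor a b"
    using cantor_graph_right_unique[OF N(3)] c cantor_graph_cantor by blast
  then show "M a N \<and> M b N \<and> c = cantor a b" using N by blast
qed (use cantor_graph_cantor in blast)

lemma cantor_in_N: "M a N \<Longrightarrow> M b N \<Longrightarrow> M (cantor a b) N"
  using cantor_graph_cantor cantor_graph_in_N by blast

lemma cantor_inject:
  "M a N \<Longrightarrow> M b N \<Longrightarrow> M a' N \<Longrightarrow> M b' N \<Longrightarrow> cantor a b = cantor a' b' \<Longrightarrow> a = a' \<and> b = b'"
  using cantor_graph_left_unique cantor_graph_cantor cantor_in_N by metis

definition "tuple_code xs = foldl cantor emp xs"

lemma tuple_code_Nil [simp]: "tuple_code [] = emp"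
  and tuple_code_snoc [simp]: "tuple_code (xs @ [x]) = cantor (tuple_code xs) x"
  by (simp_all add: tuple_code_def)

lemma tuple_code_in_N: "\<forall>x\<in>set xs. M x N \<Longrightarrow> M (tuple_code xs) N"
  by (induction xs rule: rev_induct) (simp_all add: cantor_in_N)

lemma tuple_code_inject:
  "length xs = length ys \<Longrightarrow> \<forall>x\<in>set xs. M x N \<Longrightarrow> \<forall>y\<in>set ys. M y N \<Longrightarrow>
   tuple_code xs = tuple_code ys \<Longrightarrow> xs = ys"
proof (induction xs arbitrary: ys rule: rev_induct)
  case (snoc x xs)
  then obtain ys' y where ys: "ys = ys' @ [y]"
    by (metis length_Suc_conv_rev length_append_singleton)
  have "tuple_code xs = tuple_code ys' \<and> x = y"
    using cantor_inject[of "tuple_code xs" x "tuple_code ys'" y] snoc.prems ys tuple_code_in_N by auto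
  then show ?case using snoc ys by auto
qed simp

end

lemma sat_agree: "\<forall>v\<in>fv \<phi>. \<rho> v = \<rho>' v \<Longrightarrow> sat M \<rho> \<phi> = sat M \<rho>' \<phi>"
proof (induction \<phi> arbitrary: \<rho> \<rho>')
  case (Conj \<phi> \<psi>)
  then show ?case by (metis UnCI fv.simps(4) sat.simps(4))
next
  case (Ex v \<phi>)
  have "sat M (\<rho>(v := a)) \<phi> = sat M (\<rho>'(v := a)) \<phi>" for a
    by (rule Ex.IH) (use Ex.prems in auto)
  then show ?case by simp
qed auto

lemma sat_fun_upd_fresh: "v \<notin> fv \<phi> \<Longrightarrow> sat M (\<rho>(v := a)) \<phi> = sat M \<rho> \<phi>"
  by (rule sat_agree) auto

lemma finite_fv: "finite (fv \<phi>)"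
  by (induction \<phi>) auto

fun upds :: "(nat \<Rightarrow> 'u) \<Rightarrow> nat list \<Rightarrow> 'u list \<Rightarrow> nat \<Rightarrow> 'u" where
  "upds \<rho> (v # vs) (x # xs) = upds (\<rho>(v := x)) vs xs"
| "upds \<rho> _ _ = \<rho>"

lemma ex_length_Suc_iff: "(\<exists>xs. length xs = Suc n \<and> Q xs) \<longleftrightarrow> (\<exists>a xs. length xs = n \<and> Q (a # xs))"
  by (metis length_Suc_conv)

lemma upds_snoc: "length xs = length vs \<Longrightarrow> upds \<rho> (vs @ [u]) (xs @ [a]) = (upds \<rho> vs xs)(u := a)"
  by (induction \<rho> vs xs rule: upds.induct) auto

lemma upds_fun_upd: "y \<notin> set vs \<Longrightarrow> upds (\<rho>(y := a)) vs xs = (upds \<rho> vs xs)(y := a)"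
  by (induction \<rho> vs xs rule: upds.induct) (auto simp: fun_upd_twist)

definition "CantorFm mb nN a b c = compile mb (nth [nN, a, b, c]) 0 (CantorD (P 0) (P 1) (P 2) (P 3))"

text \<open>\<open>coded_matrix mx mb \<psi> k vs\<close> says that the code stored in variable \<open>mx + 1\<close> arises from the
  partial code in variable \<open>mx + 2 + k\<close> by appending values of \<open>vs\<close> satisfying \<open>\<psi>\<close>. Variable
  \<open>mx\<close> holds \<open>N\<close>, the variables \<open>mx + 2 + k\<close> hold the successive partial codes, and the bound
  variables of \<open>CantorFm\<close> start at \<open>mb\<close>, above all of them.\<close>

fun coded_matrix :: "nat \<Rightarrow> nat \<Rightarrow> fm \<Rightarrow> nat \<Rightarrow> nat list \<Rightarrow> fm" where
  "coded_matrix mx mb \<psi> k [] = Conj (Eq (mx + 1) (mx + 2 + k)) \<psi>"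
| "coded_matrix mx mb \<psi> k (v # vs) = Ex v (Ex (mx + 2 + Suc k)
     (Conj (CantorFm mb mx (mx + 2 + k) v (mx + 2 + Suc k)) (coded_matrix mx mb \<psi> (Suc k) vs)))"

context zf begin

lemma sat_CantorFm:
  assumes "\<rho> nN = N" "nN < mb" "a < mb" "b < mb" "c < mb"
  shows "sat M \<rho> (CantorFm mb nN a b c) = cantor_graph (\<rho> a) (\<rho> b) (\<rho> c)"
proof -
  have "sat M \<rho> (CantorFm mb nN a b c) =
      dsat M (\<lambda>_. emp) (\<lambda>j. \<rho> ([nN, a, b, c] ! j)) (CantorD (P 0) (P 1) (P 2) (P 3))"
    unfolding CantorFm_def by (rule sat_compile) (use assms in auto)
  then show ?thesis using assms by simp
qed

lemma sat_coded_matrix_Cons: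
  assumes "v < mx" "Suc k + length vs \<le> L" "mb = mx + 3 + L" "\<rho> mx = N" "M (\<rho> (mx + 2 + k)) N"
  shows "sat M \<rho> (coded_matrix mx mb \<psi> k (v # vs)) \<longleftrightarrow>
    (\<exists>a. M a N \<and>
       sat M (\<rho>(v := a, mx + 2 + Suc k := cantor (\<rho> (mx + 2 + k)) a)) (coded_matrix mx mb \<psi> (Suc k) vs))"
proof -
  let ?k = "mx + 2 + k" and ?k' = "mx + 2 + Suc k"
  have "sat M (\<rho>(v := a, ?k' := d)) (CantorFm mb mx ?k v ?k') \<longleftrightarrow>
      cantor_graph ((\<rho>(v := a, ?k' := d)) ?k) ((\<rho>(v := a, ?k' := d)) v) ((\<rho>(v := a, ?k' := d)) ?k')"
    for a d by (rule sat_CantorFm) (use assms in auto)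
  then have "sat M (\<rho>(v := a, ?k' := d)) (CantorFm mb mx ?k v ?k') \<longleftrightarrow> cantor_graph (\<rho> ?k) a d" for a d
    using assms(1) by simp
  then have "sat M \<rho> (coded_matrix mx mb \<psi> k (v # vs)) \<longleftrightarrow>
    (\<exists>a d. cantor_graph (\<rho> ?k) a d \<and> sat M (\<rho>(v := a, ?k' := d)) (coded_matrix mx mb \<psi> (Suc k) vs))"
    by simp
  also have "\<dots> \<longleftrightarrow> (\<exists>a. M a N \<and> sat M (\<rho>(v := a, ?k' := cantor (\<rho> ?k) a)) (coded_matrix mx mb \<psi> (Suc k) vs))"
    using assms(5) by (simp add: cantor_graph_iff del: coded_matrix.simps)
  finally show ?thesis .
qed

lemma sat_coded_matrix:
  assumes "\<forall>v\<in>set vs. v < mx" "\<forall>v\<in>fv \<psi>. v < mx" "k + length vs \<le> L" "mb = mx + 3 + L"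
    "\<rho> mx = N" "M (\<rho> (mx + 2 + k)) N"
  shows "sat M \<rho> (coded_matrix mx mb \<psi> k vs) \<longleftrightarrow>
    (\<exists>xs. length xs = length vs \<and> (\<forall>x\<in>set xs. M x N) \<and>
       \<rho> (mx + 1) = foldl cantor (\<rho> (mx + 2 + k)) xs \<and> sat M (upds \<rho> vs xs) \<psi>)"
  using assms
proof (induction vs arbitrary: k \<rho>)
  case (Cons v vs)
  let ?k = "mx + 2 + k" and ?k' = "mx + 2 + Suc k"
  have fresh: "?k' \<notin> set vs" "?k' \<notin> fv \<psi>" using Cons.prems(1,2) by force+
  have IH: "sat M (\<rho>(v := a, ?k' := cantor (\<rho> ?k) a)) (coded_matrix mx mb \<psi> (Suc k) vs) \<longleftrightarrow>
     (\<exists>xs. length xs = length vs \<and> (\<forall>x\<in>set xs. M x N) \<and>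
      \<rho> (mx + 1) = foldl cantor (cantor (\<rho> ?k) a) xs \<and> sat M (upds (\<rho>(v := a)) vs xs) \<psi>)"
    if a: "M a N" for a
  proof -
    define \<rho>' where "\<rho>' = \<rho>(v := a, ?k' := cantor (\<rho> ?k) a)"
    have v: "v < mx" using Cons.prems(1) by simp
    have "sat M \<rho>' (coded_matrix mx mb \<psi> (Suc k) vs) \<longleftrightarrow>
      (\<exists>xs. length xs = length vs \<and> (\<forall>x\<in>set xs. M x N) \<and>
         \<rho>' (mx + 1) = foldl cantor (\<rho>' (mx + 2 + Suc k)) xs \<and> sat M (upds \<rho>' vs xs) \<psi>)"
      by (rule Cons.IH) (use Cons.prems v cantor_in_N[OF Cons.prems(6) a] in \<open>auto simp: \<rho>'_def\<close>)
    moreover have "\<rho>' (mx + 1) = \<rho> (mx + 1)" "\<rho>' (mx + 2 + Suc k) = cantor (\<rho> ?k) a"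
      using v by (simp_all add: \<rho>'_def)
    moreover have "sat M (upds \<rho>' vs xs) \<psi> = sat M (upds (\<rho>(v := a)) vs xs) \<psi>" for xs
      using fresh by (simp add: \<rho>'_def upds_fun_upd sat_fun_upd_fresh)
    ultimately show ?thesis by (simp add: \<rho>'_def)
  qed
  have "sat M \<rho> (coded_matrix mx mb \<psi> k (v # vs)) \<longleftrightarrow>
    (\<exists>a. M a N \<and> sat M (\<rho>(v := a, ?k' := cantor (\<rho> ?k) a)) (coded_matrix mx mb \<psi> (Suc k) vs))"
    by (rule sat_coded_matrix_Cons) (use Cons.prems in auto)
  also have "\<dots> \<longleftrightarrow> (\<exists>a xs. M a N \<and> length xs = length vs \<and> (\<forall>x\<in>set xs. M x N) \<and>
      \<rho> (mx + 1) = foldl cantor (cantor (\<rho> ?k) a) xs \<and> sat M (upds (\<rho>(v := a)) vs xs) \<psi>)"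
    using IH by blast
  also have "\<dots> \<longleftrightarrow> (\<exists>xs. length xs = length (v # vs) \<and> (\<forall>x\<in>set xs. M x N) \<and>
      \<rho> (mx + 1) = foldl cantor (\<rho> ?k) xs \<and> sat M (upds \<rho> (v # vs) xs) \<psi>)"
    unfolding length_Cons ex_length_Suc_iff by auto
  finally show ?case .
qed auto

end

section \<open>Standard sets in SPOT\<close>

locale spot =
  fixes M :: "'u \<Rightarrow> 'u \<Rightarrow> bool" and st :: "'u \<Rightarrow> bool"
  assumes spot: "spot_model M st"

sublocale spot \<subseteq> zf
  using spot unfolding spot_model_def by unfold_locales (elim conjE)

context spot begin

lemma transfer_axiom:
  "\<forall>v\<in>fv \<phi> - {k}. st (\<rho> v) \<Longrightarrow> \<forall>a. st a \<longrightarrow> sat M (\<rho>(k := a)) \<phi> \<Longrightarrow> sat M (\<rho>(k := a)) \<phi>"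
  using spot[unfolded spot_model_def, THEN conjunct2, THEN conjunct1, rule_format, of \<phi> k \<rho>] by blast

lemma standard_part:
  assumes "\<And>x. M x A \<Longrightarrow> M x N"
  shows "\<exists>C. st C \<and> (\<forall>x. M x C \<longrightarrow> M x N) \<and> (\<forall>n. st n \<and> M n N \<longrightarrow> (M n C \<longleftrightarrow> M n A))"
  using spot[unfolded spot_model_def, THEN conjunct2, THEN conjunct2, THEN conjunct2, rule_format, of A]
    assms by blast

lemma transfer:
  assumes "definable M st Q" "\<And>x. st x \<Longrightarrow> Q x"
  shows "Q x"
proof -
  obtain \<phi> \<rho> k where "\<forall>v\<in>fv \<phi> - {k}. st (\<rho> v)" "\<forall>x. Q x = sat M (\<rho>(k := x)) \<phi>"
    using definable_sat[OF assms(1)] by blast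
  then show ?thesis using transfer_axiom assms(2) by simp
qed

lemma transfer_ex: "definable M st Q \<Longrightarrow> Q x \<Longrightarrow> \<exists>y. st y \<and> Q y"
  using transfer[OF definable_Not] by blast

lemma standard_if_unique: "definable M st Q \<Longrightarrow> Q x \<Longrightarrow> (\<And>y. Q y \<Longrightarrow> y = x) \<Longrightarrow> st x"
  using transfer_ex by blast

lemma standard_separation:
  assumes "definable M st Q" "st a"
  shows "\<exists>b. st b \<and> (\<forall>x. M x b \<longleftrightarrow> M x a \<and> Q x)"
proof -
  obtain b where b: "\<forall>x. M x b \<longleftrightarrow> M x a \<and> Q x"
    using separation_definable[OF definable_mono[OF assms(1)]] by blast
  have "st b"
  proof (rule standard_if_unique[OF definable_extension[OF assms]])
    show "\<forall>x. M x b \<longleftrightarrow> M x a \<and> Q x" by (rule b)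
    fix y assume "\<forall>x. M x y \<longleftrightarrow> M x a \<and> Q x"
    with b show "y = b" by (intro extensionality) blast
  qed
  with b show ?thesis by blast
qed

lemma standard_N: "st N"
proof (rule standard_if_unique[where Q = least_inductive])
  show "definable M st least_inductive"
    by (rule definableI[where f = "DConj (InductiveD (B 0))
          (DAll (DImp (InductiveD (B 0)) (DAll (DImp (DMem (B 0) (B 2)) (DMem (B 0) (B 1))))))"])
      (auto simp: least_inductive_def)
qed (use least_inductive_N least_inductive_unique in blast)+

lemma standard_emp: "st emp"
proof (rule standard_if_unique[where Q = "\<lambda>y. y = emp"])
  show "definable M st (\<lambda>y. y = emp)"
    by (rule definableI[where f = "EmptyD (B 0)"]) simp_all
qed simp_all

lemma standard_cantor:
  assumes "st a" "st b" "M a N" "M b N"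
  shows "st (cantor a b)"
proof (rule standard_if_unique[where Q = "cantor_graph a b"])
  show "definable M st (cantor_graph a b)"
    by (rule definableI[where f = "CantorD (P 0) (P 1) (P 2) (B 0)" and p = "nth [N, a, b]"])
      (use assms standard_N in \<open>auto simp: nth_Cons'\<close>)
qed (use assms cantor_graph_iff in simp_all)

lemma standard_tuple_code: "\<forall>x\<in>set xs. M x N \<and> st x \<Longrightarrow> st (tuple_code xs)"
  by (induction xs rule: rev_induct) (simp_all add: standard_emp standard_cantor tuple_code_in_N)

definition "standard_code_set C n \<Phi> \<longleftrightarrow> st C \<and> (\<forall>x. M x C \<longrightarrow> M x N) \<and>
  (\<forall>xs. length xs = n \<longrightarrow> (\<forall>x\<in>set xs. M x N \<and> st x) \<longrightarrow> (M (tuple_code xs) C \<longleftrightarrow> \<Phi> xs))"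

lemma standard_code_setD:
  "standard_code_set C n \<Phi> \<Longrightarrow> length xs = n \<Longrightarrow> \<forall>x\<in>set xs. M x N \<and> st x \<Longrightarrow>
   M (tuple_code xs) C \<longleftrightarrow> \<Phi> xs"
  unfolding standard_code_set_def by blast

text \<open>The parameters of \<open>\<psi>\<close> need not be standard, so here Standard Part does the work that
  Transfer does for the quantifier steps.\<close>

lemma standard_code_set_matrix: "\<exists>C. standard_code_set C (length vs) (\<lambda>xs. sat M (upds \<rho> vs xs) \<psi>)"
proof -
  define mx where "mx = Suc (Max (fv \<psi> \<union> set vs))"
  have below: "\<forall>v\<in>fv \<psi> \<union> set vs. v < mx"
    using Max_ge[of "fv \<psi> \<union> set vs"] finite_fv by (auto simp: mx_def less_Suc_eq_le)
  define mb where "mb = mx + 3 + length vs"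
  define \<rho>\<^sub>0 where "\<rho>\<^sub>0 = \<rho>(mx := N, mx + 2 := emp)"
  obtain A where A: "\<forall>c. M c A \<longleftrightarrow> M c N \<and> sat M (\<rho>\<^sub>0(mx + 1 := c)) (coded_matrix mx mb \<psi> 0 vs)"
    using separation by blast
  obtain C where C: "st C" "\<forall>x. M x C \<longrightarrow> M x N" "\<forall>n. st n \<and> M n N \<longrightarrow> (M n C \<longleftrightarrow> M n A)"
    using standard_part[of A] A by blast
  have "M (tuple_code xs) C \<longleftrightarrow> sat M (upds \<rho> vs xs) \<psi>"
    if len: "length xs = length vs" and xs: "\<forall>x\<in>set xs. M x N \<and> st x" for xs
  proof -
    define c where "c = tuple_code xs"
    have c: "M c N" "st c" using tuple_code_in_N standard_tuple_code xs by (auto simp: c_def)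
    define \<rho>\<^sub>1 where "\<rho>\<^sub>1 = \<rho>\<^sub>0(mx + 1 := c)"
    have "M c A \<longleftrightarrow> sat M \<rho>\<^sub>1 (coded_matrix mx mb \<psi> 0 vs)" using A c by (simp add: \<rho>\<^sub>1_def)
    also have "\<dots> \<longleftrightarrow> (\<exists>ys. length ys = length vs \<and> (\<forall>y\<in>set ys. M y N) \<and>
        c = tuple_code ys \<and> sat M (upds \<rho>\<^sub>1 vs ys) \<psi>)"
      by (subst sat_coded_matrix[where L = "length vs"])
        (use below in \<open>auto simp: mb_def \<rho>\<^sub>1_def \<rho>\<^sub>0_def tuple_code_def\<close>)
    also have "\<dots> \<longleftrightarrow> sat M (upds \<rho>\<^sub>1 vs xs) \<psi>"
    proof
      assume "\<exists>ys. length ys = length vs \<and> (\<forall>y\<in>set ys. M y N) \<and>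
        c = tuple_code ys \<and> sat M (upds \<rho>\<^sub>1 vs ys) \<psi>"
      then obtain ys where ys: "length ys = length vs" "\<forall>y\<in>set ys. M y N"
        "tuple_code xs = tuple_code ys" "sat M (upds \<rho>\<^sub>1 vs ys) \<psi>"
        by (auto simp: c_def)
      have "xs = ys" by (rule tuple_code_inject) (use ys len xs in auto)
      with ys(4) show "sat M (upds \<rho>\<^sub>1 vs xs) \<psi>" by simp
    qed (use len xs in \<open>auto simp: c_def\<close>)
    also have "\<dots> \<longleftrightarrow> sat M (upds \<rho> vs xs) \<psi>"
    proof -
      have "mx \<notin> set vs" "mx + 1 \<notin> set vs" "mx + 2 \<notin> set vs"
        "mx \<notin> fv \<psi>" "mx + 1 \<notin> fv \<psi>" "mx + 2 \<notin> fv \<psi>"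
        using below by (auto dest!: bspec)
      then show ?thesis by (simp add: \<rho>\<^sub>1_def \<rho>\<^sub>0_def upds_fun_upd sat_fun_upd_fresh)
    qed
    finally show ?thesis using C(3) c by (simp add: c_def)
  qed
  then show ?thesis using C(1,2) unfolding standard_code_set_def by blast
qed

lemma standard_code_set_All:
  assumes C: "standard_code_set C (Suc n) \<Phi>"
  shows "\<exists>C'. standard_code_set C' n (\<lambda>xs. \<forall>a. M a N \<and> st a \<longrightarrow> \<Phi> (xs @ [a]))"
proof -
  have "st C" using C unfolding standard_code_set_def by blast
  have "definable M st (\<lambda>c. M c N \<and> (\<forall>a. M a N \<longrightarrow> M (cantor c a) C))"
    by (rule definableI[where f = "DConj (DMem (B 0) (P 0))
          (DAll (DImp (DMem (B 0) (P 0)) (DAll (DImp (CantorD (P 0) (B 2) (B 1) (B 0)) (DMem (B 0) (P 1))))))"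
          and p = "nth [N, C]"])
      (use standard_N \<open>st C\<close> in \<open>auto simp: cantor_graph_iff nth_Cons'\<close>)
  then obtain C' where C': "st C'" "\<forall>c. M c C' \<longleftrightarrow> M c N \<and> (\<forall>a. M a N \<longrightarrow> M (cantor c a) C)"
    using standard_separation standard_N by fastforce
  have "M (tuple_code xs) C' \<longleftrightarrow> (\<forall>a. M a N \<and> st a \<longrightarrow> \<Phi> (xs @ [a]))"
    if xs: "length xs = n" "\<forall>x\<in>set xs. M x N \<and> st x" for xs
  proof -
    define c where "c = tuple_code xs"
    have c: "M c N" "st c" using tuple_code_in_N standard_tuple_code xs(2) by (auto simp: c_def)
    have "definable M st (\<lambda>a. M a N \<longrightarrow> M (cantor c a) C)"
      by (rule definableI[where f = "DImp (DMem (B 0) (P 0)) (DAll (DImp (CantorD (P 0) (P 1) (B 1) (B 0)) (DMem (B 0) (P 2))))"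
            and p = "nth [N, c, C]"])
        (use standard_N c \<open>st C\<close> in \<open>auto simp: cantor_graph_iff nth_Cons'\<close>)
    then have "(\<forall>a. M a N \<longrightarrow> M (cantor c a) C) \<longleftrightarrow> (\<forall>a. M a N \<and> st a \<longrightarrow> M (cantor c a) C)"
      using transfer by blast
    also have "\<dots> \<longleftrightarrow> (\<forall>a. M a N \<and> st a \<longrightarrow> \<Phi> (xs @ [a]))"
      using standard_code_setD[OF C, of "xs @ [_]"] xs by (auto simp: c_def)
    finally show ?thesis using C' c by (simp add: c_def)
  qed
  then show ?thesis using C' unfolding standard_code_set_def by blast
qed

lemma standard_code_set_Ex:
  assumes C: "standard_code_set C (Suc n) \<Phi>"
  shows "\<exists>C'. standard_code_set C' n (\<lambda>xs. \<exists>a. M a N \<and> st a \<and> \<Phi> (xs @ [a]))"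
proof -
  have "st C" using C unfolding standard_code_set_def by blast
  have "definable M st (\<lambda>c. M c N \<and> (\<exists>a. M a N \<and> M (cantor c a) C))"
    by (rule definableI[where f = "DConj (DMem (B 0) (P 0)) (DEx (DConj (DMem (B 0) (P 0))
          (DEx (DConj (CantorD (P 0) (B 2) (B 1) (B 0)) (DMem (B 0) (P 1))))))"
          and p = "nth [N, C]"])
      (use standard_N \<open>st C\<close> in \<open>auto simp: cantor_graph_iff nth_Cons'\<close>)
  then obtain C' where C': "st C'" "\<forall>c. M c C' \<longleftrightarrow> M c N \<and> (\<exists>a. M a N \<and> M (cantor c a) C)"
    using standard_separation standard_N by fastforce
  have "M (tuple_code xs) C' \<longleftrightarrow> (\<exists>a. M a N \<and> st a \<and> \<Phi> (xs @ [a]))"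
    if xs: "length xs = n" "\<forall>x\<in>set xs. M x N \<and> st x" for xs
  proof -
    define c where "c = tuple_code xs"
    have c: "M c N" "st c" using tuple_code_in_N standard_tuple_code xs(2) by (auto simp: c_def)
    have "definable M st (\<lambda>a. M a N \<and> M (cantor c a) C)"
      by (rule definableI[where f = "DConj (DMem (B 0) (P 0)) (DEx (DConj (CantorD (P 0) (P 1) (B 1) (B 0)) (DMem (B 0) (P 2))))"
            and p = "nth [N, c, C]"])
        (use standard_N c \<open>st C\<close> in \<open>auto simp: cantor_graph_iff nth_Cons'\<close>)
    then have "(\<exists>a. M a N \<and> M (cantor c a) C) \<longleftrightarrow> (\<exists>a. M a N \<and> st a \<and> M (cantor c a) C)"
      using transfer_ex by blast
    also have "\<dots> \<longleftrightarrow> (\<exists>a. M a N \<and> st a \<and> \<Phi> (xs @ [a]))"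
      using standard_code_setD[OF C, of "xs @ [_]"] xs by (auto simp: c_def)
    finally show ?thesis using C' c by (simp add: c_def)
  qed
  then show ?thesis using C' unfolding standard_code_set_def by blast
qed

lemma standard_code_set_prenex:
  "\<exists>C. standard_code_set C (length vs) (\<lambda>xs. sat_prenex M st (upds \<rho> vs xs) qs \<psi>)"
proof (induction qs arbitrary: vs)
  case Nil
  then show ?case using standard_code_set_matrix by simp
next
  case (Cons q qs)
  obtain b u where q: "q = (b, u)" by fastforce
  obtain C where C: "standard_code_set C (Suc (length vs))
      (\<lambda>ys. sat_prenex M st (upds \<rho> (vs @ [u]) ys) qs \<psi>)"
    using Cons.IH[of "vs @ [u]"] by auto
  have snoc: "upds \<rho> (vs @ [u]) (xs @ [a]) = (upds \<rho> vs xs)(u := a)" if "length xs = length vs" for xs a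
    using upds_snoc[OF that] .
  show ?case
  proof (cases b)
    case True
    from standard_code_set_All[OF C] obtain C' where "standard_code_set C' (length vs)
        (\<lambda>xs. \<forall>a. M a N \<and> st a \<longrightarrow> sat_prenex M st (upds \<rho> (vs @ [u]) (xs @ [a])) qs \<psi>)" ..
    then have "standard_code_set C' (length vs) (\<lambda>xs. sat_prenex M st (upds \<rho> vs xs) (q # qs) \<psi>)"
      using q True snoc unfolding standard_code_set_def by simp
    then show ?thesis ..
  next
    case False
    from standard_code_set_Ex[OF C] obtain C' where "standard_code_set C' (length vs)
        (\<lambda>xs. \<exists>a. M a N \<and> st a \<and> sat_prenex M st (upds \<rho> (vs @ [u]) (xs @ [a])) qs \<psi>)" ..
    then have "standard_code_set C' (length vs) (\<lambda>xs. sat_prenex M st (upds \<rho> vs xs) (q # qs) \<psi>)"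
      using q False snoc unfolding standard_code_set_def by simp
    then show ?thesis ..
  qed
qed

lemma standard_code_set_unary:
  assumes C: "standard_code_set C 1 \<Phi>"
  shows "\<exists>S. st S \<and> (\<forall>x. st x \<longrightarrow> (M x S \<longleftrightarrow> M x N \<and> \<Phi> [x]))"
proof -
  have "st C" using C unfolding standard_code_set_def by blast
  have "definable M st (\<lambda>x. M (cantor emp x) C \<and> M x N)"
    by (rule definableI[where f = "DEx (DConj (CantorD (P 0) (P 1) (B 1) (B 0)) (DMem (B 0) (P 2)))"
          and p = "nth [N, emp, C]"])
      (use standard_N standard_emp \<open>st C\<close> in \<open>auto simp: cantor_graph_iff nth_Cons'\<close>)
  then obtain S where S: "st S" "\<forall>x. M x S \<longleftrightarrow> M x N \<and> M (cantor emp x) C \<and> M x N"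
    using standard_separation standard_N by fastforce
  have "tuple_code [x] = cantor emp x" for x
    using tuple_code_snoc[of "[]" x] by simp
  then have "M x S \<longleftrightarrow> M x N \<and> \<Phi> [x]" if "st x" for x
    using S(2) C that unfolding standard_code_set_def by (metis One_nat_def length_Cons list.size(3) set_ConsD empty_iff list.set(1))
  then show ?thesis using S(1) by blast
qed

end

theorem proposition2p7:
  fixes M :: "'u \<Rightarrow> 'u \<Rightarrow> bool" and st :: "'u \<Rightarrow> bool"
    and qs :: "(bool \<times> nat) list" and \<psi> :: fm and n :: nat and \<rho> :: "nat \<Rightarrow> 'u"
  assumes "spot_model M st"
  shows "\<exists>S. st S \<and> (\<forall>x. st x \<longrightarrow>
            (M x S \<longleftrightarrow> M x (nat_zf M) \<and> sat_prenex M st (\<rho>(n := x)) qs \<psi>))"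
proof -
  interpret spot M st by (rule spot.intro) (rule assms)
  obtain C where "standard_code_set C 1 (\<lambda>xs. sat_prenex M st (upds \<rho> [n] xs) qs \<psi>)"
    using standard_code_set_prenex[where vs = "[n]" and \<rho> = \<rho> and qs = qs and \<psi> = \<psi>]
    by (auto simp: One_nat_def)
  from standard_code_set_unary[OF this] show ?thesis by simp
qed

end
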